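(* Fix $\alpha\in[0,1)$, $\beta\in(0,1)$, $Q=1-\alpha$, $S=1-\beta$. Let $\nu_n^{\alpha,\beta}$ be the stationary law of the combined count chain and, for $0\le k\le n$, $w_{n,k}^{\alpha,\beta}:=\frac{(n)_k}{n^k}Q^kS^{k(k+1)/2}$ (with $(n)_k=n(n-1)\cdots(n-k+1)$, $w_{n,0}^{\alpha,\beta}=1$). There are constants $0<c<C<\infty$ and an integer $M<\infty$, depending only on $\alpha,\beta$, such that for all sufficiently large $n$ and all $M\le k\le n$, $cw_{n,k}^{\alpha,\beta}\le\nu_n^{\alpha,\beta}(k)\le Cw_{n,k}^{\alpha,\beta}$. Moreover $\nu_n^{\alpha,\beta}(n)\sim\frac{1}{(S;S)_\infty}\frac{n!}{n^n}Q^nS^{n(n+1)/2}$.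
   Context: The combined count chain $(K_t)$ on $\{0,\dots,n\}$: given $K_t=k$, with probability $k/n$, $K_{t+1}\sim\mathrm{Bin}(k-1,S)+\mathrm{Bernoulli}(QS)$, and with probability $(n-k)/n$, $K_{t+1}\sim\mathrm{Bin}(k,S)+\mathrm{Bernoulli}(QS)$ (independent summands; the first case is omitted when $k=0$). It is irreducible and aperiodic with unique stationary law $\nu_n^{\alpha,\beta}$. (It counts present types in the collector where each round a uniform type is refreshed to present w.p. $Q$, absent w.p. $\alpha$, then every present coupon is independently retained w.p. $S$.) $(S;S)_\infty:=\prod_{r\ge1}(1-S^r)$. *)

theory Defs
  imports "HOL-Probability.Probability" "HOL-Library.Landau_Symbols"
begin

text \<open>For k = 0 the first case has probability 0.\<close>
definition count_step :: "real \<Rightarrow> real \<Rightarrow> nat \<Rightarrow> nat \<Rightarrow> nat pmf" where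
  "count_step \<alpha> \<beta> n k =
     (let Q = 1 - \<alpha>; S = 1 - \<beta> in
      bind_pmf (bernoulli_pmf (real k / real n))
        (\<lambda>b. map_pmf (\<lambda>(x, y). x + (if y then 1 else 0))
               (pair_pmf (binomial_pmf (if b then k - 1 else k) S)
                         (bernoulli_pmf (Q * S)))))"

definition is_stationary_law :: "real \<Rightarrow> real \<Rightarrow> nat \<Rightarrow> (nat \<Rightarrow> real) \<Rightarrow> bool" where
  "is_stationary_law \<alpha> \<beta> n \<nu> \<longleftrightarrow>
     (\<forall>j\<le>n. 0 \<le> \<nu> j) \<and> (\<Sum>j\<le>n. \<nu> j) = 1 \<and>
     (\<forall>j\<le>n. \<nu> j = (\<Sum>k\<le>n. \<nu> k * pmf (count_step \<alpha> \<beta> n k) j))"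

definition wgt :: "real \<Rightarrow> real \<Rightarrow> nat \<Rightarrow> nat \<Rightarrow> real" where
  "wgt \<alpha> \<beta> n k =
     (\<Prod>i<k. real (n - i)) / real n ^ k * (1 - \<alpha>) ^ k * (1 - \<beta>) ^ (k * (k + 1) div 2)"

definition qpoch_inf :: "real \<Rightarrow> real" where
  "qpoch_inf S = prodinf (\<lambda>r. 1 - S ^ (r + 1))"

end

theory Submission
  imports Defs
begin

text \<open>
  The key quantities are the binomial moments \<open>h m = \<Sum>j. \<nu> j * (j choose m)\<close> of \<open>\<nu>\<close>.
  One step of the chain maps \<open>E (K choose m)\<close> to an affine combination of \<open>E (K choose m)\<close>
  and \<open>E (K choose (m - 1))\<close>, so stationarity yields a first-order recursion in \<open>m\<close>, solved by
  \<open>h m * D n m = w n m\<close> with \<open>D n m = \<Prod>i<m. 1 - S^(i+1) * (1 - (i+1)/n)\<close>.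
  This damped q-Pochhammer product lies between \<open>(S;S)\<^sub>\<infinity>\<close> and 1 and tends to
  \<open>(S;S)\<^sub>\<infinity>\<close> along the diagonal \<open>m = n\<close>.
  Bonferroni gives \<open>h k - (k+1) h (k+1) \<le> \<nu> k \<le> h k\<close>, and the recursion gives
  \<open>\<beta> h (k+1) \<le> S^(k+1) h k\<close>; once \<open>(k+1) S^(k+1) \<le> \<beta>/2\<close> this yields
  \<open>w/2 \<le> \<nu> k \<le> w/(S;S)\<^sub>\<infinity>\<close>. On the diagonal \<open>h n = \<nu> n\<close>, whence the asymptotics.
\<close>

lemma sum_binomial_choose:
  fixes p :: "'a::comm_ring_1"
  shows "(\<Sum>x\<le>a. of_nat (a choose x) * p ^ x * (1 - p) ^ (a - x) * of_nat (x choose m))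
           = of_nat (a choose m) * p ^ m"
proof (cases "m \<le> a")
  case False
  then show ?thesis by (simp add: binomial_eq_0)
next
  case True
  have "(\<Sum>x\<le>a. of_nat (a choose x) * p ^ x * (1 - p) ^ (a - x) * of_nat (x choose m))
      = (\<Sum>x\<in>{m..a}. of_nat (a choose x) * p ^ x * (1 - p) ^ (a - x) * of_nat (x choose m))"
    by (rule sum.mono_neutral_right) (auto simp: binomial_eq_0)
  also have "\<dots> = (\<Sum>i\<le>a - m. of_nat (a choose (m + i)) * p ^ (m + i) * (1 - p) ^ (a - m - i)
                                 * of_nat ((m + i) choose m))"
    using True by (intro sum.reindex_bij_witness[of _ "\<lambda>i. m + i" "\<lambda>x. x - m"]) auto
  also have "\<dots> = of_nat (a choose m) * p ^ m
                   * (\<Sum>i\<le>a - m. of_nat ((a - m) choose i) * p ^ i * (1 - p) ^ (a - m - i))"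
  proof -
    have "of_nat (a choose (m + i)) * p ^ (m + i) * (1 - p) ^ (a - m - i) * of_nat ((m + i) choose m)
        = of_nat (a choose m) * p ^ m * (of_nat ((a - m) choose i) * p ^ i * (1 - p) ^ (a - m - i))"
      if "i \<le> a - m" for i
    proof -
      have "(a choose (m + i)) * ((m + i) choose m) = (a choose m) * ((a - m) choose i)"
        using choose_mult[of m "m + i" a] that True by simp
      then have "of_nat (a choose (m + i)) * of_nat ((m + i) choose m)
                 = (of_nat (a choose m) * of_nat ((a - m) choose i) :: 'a)"
        by (metis of_nat_mult)
      then show ?thesis
        by (simp add: power_add ac_simps) (simp add: mult.assoc[symmetric])
    qed
    then show ?thesis
      unfolding sum_distrib_left by (intro sum.cong refl) simp
  qed
  also have "\<dots> = of_nat (a choose m) * p ^ m * (p + (1 - p)) ^ (a - m)"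
    by (simp only: binomial_ring)
  finally show ?thesis by simp
qed

lemma choose_pred_weighted_sum:
  "real k * real ((k - 1) choose r) + (real n - real k) * real (k choose r)
     = real (k choose r) * (real n - real r)"
proof (cases "r \<le> k")
  case True
  have "real (k - r) * real (k choose r) = real k * real ((k - 1) choose r)"
    by (metis binomial_absorb_comp of_nat_mult)
  then show ?thesis using True by (simp add: of_nat_diff algebra_simps)
next
  case False
  then show ?thesis by (simp add: binomial_eq_0)
qed

definition binomial_plus_bernoulli :: "nat \<Rightarrow> real \<Rightarrow> real \<Rightarrow> nat pmf" where
  "binomial_plus_bernoulli a p q =
     map_pmf (\<lambda>(x, y). x + (if y then 1 else 0)) (pair_pmf (binomial_pmf a p) (bernoulli_pmf q))"

lemma binomial_plus_bernoulli_choose_moment: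
  assumes p: "0 \<le> p" "p \<le> 1" and q: "0 \<le> q" "q \<le> 1" and a: "a < n"
  shows "(\<Sum>j\<le>n. pmf (binomial_plus_bernoulli a p q) j * real (j choose Suc m))
       = real (a choose Suc m) * p ^ Suc m + q * (real (a choose m) * p ^ m)"
proof -
  let ?P = "pair_pmf (binomial_pmf a p) (bernoulli_pmf q)"
  let ?B = "\<lambda>x. real (a choose x) * p ^ x * (1 - p) ^ (a - x)"
  have "(\<Sum>j\<le>n. pmf (binomial_plus_bernoulli a p q) j * real (j choose Suc m))
      = measure_pmf.expectation (binomial_plus_bernoulli a p q) (\<lambda>j. real (j choose Suc m))"
    using p a by (subst integral_measure_pmf_real[where A="{..n}"])
      (auto simp: binomial_plus_bernoulli_def set_pmf_binomial_eq mult.commute split: if_splits)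
  also have "\<dots> = (\<Sum>(x, y)\<in>{..a} \<times> UNIV.
                      real ((x + (if y then 1 else 0)) choose Suc m) * pmf ?P (x, y))"
    unfolding binomial_plus_bernoulli_def integral_map_pmf
    by (subst integral_measure_pmf_real[where A="{..a} \<times> UNIV"])
      (use p in \<open>auto simp: set_pmf_binomial_eq split: if_splits intro!: sum.cong\<close>)
  also have "\<dots> = (\<Sum>x\<le>a. ?B x * real (x choose Suc m) + q * (?B x * real (x choose m)))"
    unfolding sum.cartesian_product[symmetric] using p q
    by (intro sum.cong refl) (simp add: UNIV_bool pmf_pair algebra_simps)
  also have "\<dots> = real (a choose Suc m) * p ^ Suc m + q * (real (a choose m) * p ^ m)"
    by (simp only: sum.distrib sum_distrib_left[symmetric] sum_binomial_choose)
  finally show ?thesis .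
qed

lemma count_step_eq_bind:
  "count_step \<alpha> \<beta> n k =
     bind_pmf (bernoulli_pmf (real k / real n))
       (\<lambda>b. binomial_plus_bernoulli (if b then k - 1 else k) (1 - \<beta>) ((1 - \<alpha>) * (1 - \<beta>)))"
  unfolding count_step_def binomial_plus_bernoulli_def Let_def by simp

lemma count_step_choose_moment:
  assumes n: "0 < n" "k \<le> n" and \<alpha>: "0 \<le> \<alpha>" "\<alpha> \<le> 1" and \<beta>: "0 \<le> \<beta>" "\<beta> \<le> 1"
  shows "(\<Sum>j\<le>n. pmf (count_step \<alpha> \<beta> n k) j * real (j choose Suc m))
     = (1 - \<beta>) ^ Suc m * ((1 - real (Suc m) / real n) * real (k choose Suc m)
         + (1 - \<alpha>) * (1 - real m / real n) * real (k choose m))"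
proof -
  define S Q where "S = 1 - \<beta>" and "Q = 1 - \<alpha>"
  define A where "A b = binomial_plus_bernoulli (if b then k - 1 else k) S (Q * S)" for b
  define E where "E b = (\<Sum>j\<le>n. pmf (A b) j * real (j choose Suc m))" for b
  define p where "p = real k / real n"
  have S: "0 \<le> S" "S \<le> 1" and QS: "0 \<le> Q * S" "Q * S \<le> 1"
    using \<alpha> \<beta> by (auto simp: S_def Q_def mult_le_one)
  have p: "0 \<le> p" "p \<le> 1" using n by (auto simp: p_def)
  have "(\<Sum>j\<le>n. pmf (count_step \<alpha> \<beta> n k) j * real (j choose Suc m))
      = (\<Sum>j\<le>n. p * (pmf (A True) j * real (j choose Suc m))
                   + (1 - p) * (pmf (A False) j * real (j choose Suc m)))"
    using p by (intro sum.cong refl)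
      (simp add: count_step_eq_bind pmf_bind A_def S_def Q_def p_def algebra_simps)
  also have "\<dots> = p * E True + (1 - p) * E False"
    by (simp add: E_def sum.distrib sum_distrib_left)
  also have "\<dots> = p * (real ((k - 1) choose Suc m) * S ^ Suc m + Q * S * (real ((k - 1) choose m) * S ^ m))
      + (1 - p) * (real (k choose Suc m) * S ^ Suc m + Q * S * (real (k choose m) * S ^ m))"
  proof -
    have "E True = real ((k - 1) choose Suc m) * S ^ Suc m + Q * S * (real ((k - 1) choose m) * S ^ m)"
      using n by (simp add: E_def A_def binomial_plus_bernoulli_choose_moment[OF S QS])
    moreover have "(1 - p) * E False
        = (1 - p) * (real (k choose Suc m) * S ^ Suc m + Q * S * (real (k choose m) * S ^ m))"
      \<comment> \<open>for \<open>k = n\<close> the moment lemma does not apply, but the weight \<open>1 - p\<close> vanishes\<close>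
      using n binomial_plus_bernoulli_choose_moment[OF S QS]
      by (cases "k < n") (simp_all add: E_def A_def p_def)
    ultimately show ?thesis by simp
  qed
  also have "\<dots> = S ^ Suc m / real n
          * (real k * real ((k - 1) choose Suc m) + (real n - real k) * real (k choose Suc m))
      + Q * S ^ Suc m / real n
          * (real k * real ((k - 1) choose m) + (real n - real k) * real (k choose m))"
    using n by (simp add: p_def field_simps)
  also have "\<dots> = S ^ Suc m * ((1 - real (Suc m) / real n) * real (k choose Suc m)
         + Q * (1 - real m / real n) * real (k choose m))"
    using n by (simp only: choose_pred_weighted_sum) (simp add: field_simps)
  finally show ?thesis by (simp add: S_def Q_def)
qed

definition binomial_moment :: "(nat \<Rightarrow> real) \<Rightarrow> nat \<Rightarrow> nat \<Rightarrow> real" where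
  "binomial_moment v n m = (\<Sum>j\<le>n. v j * real (j choose m))"

lemma binomial_moment_0:
  assumes "is_stationary_law \<alpha> \<beta> n v"
  shows "binomial_moment v n 0 = 1"
proof -
  have "(\<Sum>j\<le>n. v j) = 1"
    using assms unfolding is_stationary_law_def by blast
  then show ?thesis by (simp add: binomial_moment_def)
qed

lemma binomial_moment_nonneg:
  assumes "is_stationary_law \<alpha> \<beta> n v"
  shows "0 \<le> binomial_moment v n m"
  using assms unfolding binomial_moment_def is_stationary_law_def by (auto intro!: sum_nonneg)

lemma le_binomial_moment:
  assumes "\<And>j. j \<le> n \<Longrightarrow> 0 \<le> v j" "k \<le> n"
  shows "v k \<le> binomial_moment v n k"
proof -
  have "v k * real (k choose k) \<le> (\<Sum>j\<le>n. v j * real (j choose k))"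
    using assms by (intro member_le_sum) auto
  then show ?thesis by (simp add: binomial_moment_def)
qed

lemma binomial_moment_Bonferroni:
  assumes nonneg: "\<And>j. j \<le> n \<Longrightarrow> 0 \<le> v j" and k: "k \<le> n"
  shows "binomial_moment v n k - real (Suc k) * binomial_moment v n (Suc k) \<le> v k"
proof -
  have "binomial_moment v n k - real (Suc k) * binomial_moment v n (Suc k)
      = (\<Sum>j\<le>n. v j * (real (j choose k) * (1 - real (j - k))))"
  proof -
    have "real (Suc k) * real (j choose Suc k) = real (j - k) * real (j choose k)" for j
      by (metis binomial_absorption binomial_absorb_comp of_nat_mult)
    then show ?thesis
      by (simp add: binomial_moment_def sum_distrib_left sum_subtractf algebra_simps)
  qed
  also have "\<dots> \<le> (\<Sum>j\<le>n. if j = k then v j else 0)"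
  proof (rule sum_mono)
    fix j assume j: "j \<in> {..n}"
    consider "j < k" | "j = k" | "k < j" by linarith
    then show "v j * (real (j choose k) * (1 - real (j - k))) \<le> (if j = k then v j else 0)"
    proof cases
      case 3
      then have "1 - real (j - k) \<le> 0" by simp
      then show ?thesis
        using 3 nonneg[of j] j by (simp add: mult_nonneg_nonpos)
    qed (simp_all add: binomial_eq_0)
  qed
  also have "\<dots> = v k"
    using k by simp
  finally show ?thesis .
qed

lemma binomial_moment_diag: "binomial_moment v n n = v n"
proof -
  have "binomial_moment v n n = (\<Sum>j\<le>n. if j = n then v j else 0)"
    unfolding binomial_moment_def by (rule sum.cong) (auto simp: binomial_eq_0)
  then show ?thesis by simp
qed

lemma binomial_moment_Suc:
  assumes st: "is_stationary_law \<alpha> \<beta> n v" and n: "0 < n"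
    and \<alpha>: "0 \<le> \<alpha>" "\<alpha> \<le> 1" and \<beta>: "0 \<le> \<beta>" "\<beta> \<le> 1"
  shows "binomial_moment v n (Suc m) * (1 - (1 - \<beta>) ^ Suc m * (1 - real (Suc m) / real n))
       = (1 - \<beta>) ^ Suc m * ((1 - \<alpha>) * (1 - real m / real n) * binomial_moment v n m)"
proof -
  have solve: "x = a * (b * x + c) \<Longrightarrow> x * (1 - a * b) = a * c" for x a b c :: real
    by (simp add: algebra_simps)
  have "binomial_moment v n (Suc m)
      = (\<Sum>j\<le>n. (\<Sum>k\<le>n. v k * pmf (count_step \<alpha> \<beta> n k) j) * real (j choose Suc m))"
    using st unfolding binomial_moment_def is_stationary_law_def by (intro sum.cong) auto
  also have "\<dots> = (\<Sum>k\<le>n. v k * (\<Sum>j\<le>n. pmf (count_step \<alpha> \<beta> n k) j * real (j choose Suc m)))"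
    unfolding sum_distrib_left sum_distrib_right by (subst sum.swap) (simp add: mult.assoc)
  also have "\<dots> = (\<Sum>k\<le>n. v k * ((1 - \<beta>) ^ Suc m * ((1 - real (Suc m) / real n) * real (k choose Suc m)
                     + (1 - \<alpha>) * (1 - real m / real n) * real (k choose m))))"
    using n \<alpha> \<beta> by (intro sum.cong refl) (simp add: count_step_choose_moment)
  also have "\<dots> = (1 - \<beta>) ^ Suc m * ((1 - real (Suc m) / real n) * binomial_moment v n (Suc m)
           + (1 - \<alpha>) * (1 - real m / real n) * binomial_moment v n m)"
    by (simp add: binomial_moment_def distrib_left sum.distrib sum_distrib_left mult_ac)
  finally show ?thesis
    by (rule solve)
qed

definition qpoch :: "real \<Rightarrow> nat \<Rightarrow> real" where
  "qpoch S m = (\<Prod>i<m. 1 - S ^ Suc i)"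

lemma convergent_prod_qpoch:
  fixes S :: real
  assumes S: "0 \<le> S" "S < 1"
  shows "convergent_prod (\<lambda>i. 1 - S ^ (i + 1))"
proof -
  have "summable (\<lambda>i. \<bar>- (S ^ Suc i)\<bar>)"
    using S by (simp add: summable_geometric)
  moreover have "- (S ^ Suc i) \<noteq> -1" for i
    using S by (simp add: power_less_one_iff less_imp_neq del: power_Suc)
  ultimately have "convergent_prod (\<lambda>i. 1 + - (S ^ Suc i))"
    by (rule summable_imp_convergent_prod_real)
  then show ?thesis by simp
qed

lemma qpoch_tendsto:
  assumes "0 \<le> S" "S < 1"
  shows "qpoch S \<longlonglongrightarrow> qpoch_inf S"
proof -
  have "(\<lambda>m. \<Prod>i\<le>m. 1 - S ^ (i + 1)) \<longlonglongrightarrow> qpoch_inf S"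
    unfolding qpoch_inf_def using convergent_prod_qpoch[OF assms] by (rule convergent_prod_LIMSEQ)
  then have "(\<lambda>m. qpoch S (Suc m)) \<longlonglongrightarrow> qpoch_inf S"
    by (simp add: qpoch_def lessThan_Suc_atMost)
  then show ?thesis
    by (rule LIMSEQ_imp_Suc)
qed

lemma qpoch_pos:
  assumes "0 \<le> S" "S < 1"
  shows "0 < qpoch S m"
  unfolding qpoch_def using assms by (intro prod_pos) (simp add: power_less_one_iff del: power_Suc)

lemma decseq_qpoch:
  assumes "0 \<le> S" "S < 1"
  shows "decseq (qpoch S)"
proof (rule decseq_SucI)
  fix m
  have "qpoch S (Suc m) = qpoch S m * (1 - S ^ Suc m)"
    by (simp add: qpoch_def)
  also have "\<dots> \<le> qpoch S m"
    using qpoch_pos[OF assms, of m] assms by (simp add: mult_left_le)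
  finally show "qpoch S (Suc m) \<le> qpoch S m" .
qed

lemma qpoch_inf_le_qpoch:
  assumes "0 \<le> S" "S < 1"
  shows "qpoch_inf S \<le> qpoch S m"
  using decseq_qpoch[OF assms] qpoch_tendsto[OF assms] by (rule decseq_ge)

lemma qpoch_inf_pos:
  assumes S: "0 \<le> S" "S < 1"
  shows "0 < qpoch_inf S"
proof -
  have "qpoch_inf S \<noteq> 0"
    unfolding qpoch_inf_def using convergent_prod_qpoch[OF S]
    by (rule prodinf_nonzero) (use S in \<open>simp add: power_less_one_iff less_imp_neq del: power_Suc\<close>)
  moreover have "0 \<le> qpoch_inf S"
    using qpoch_tendsto[OF S] qpoch_pos[OF S] by (intro LIMSEQ_le_const) (auto intro: less_imp_le)
  ultimately show ?thesis by simp
qed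

definition qpoch_damped :: "real \<Rightarrow> nat \<Rightarrow> nat \<Rightarrow> real" where
  "qpoch_damped S n m = (\<Prod>i<m. 1 - S ^ Suc i * (1 - real (Suc i) / real n))"

lemma qpoch_damped_factor_bounds:
  fixes S :: real
  assumes "0 \<le> S" "S \<le> 1" "i < n"
  shows "0 \<le> 1 - S ^ Suc i"
    and "1 - S ^ Suc i \<le> 1 - S ^ Suc i * (1 - real (Suc i) / real n)"
    and "1 - S ^ Suc i * (1 - real (Suc i) / real n) \<le> 1"
proof -
  have "0 \<le> 1 - real (Suc i) / real n" "1 - real (Suc i) / real n \<le> 1"
    using assms by auto
  moreover have "0 \<le> S ^ Suc i" "S ^ Suc i \<le> 1"
    using assms by (simp, intro power_le_one)
  ultimately show "0 \<le> 1 - S ^ Suc i"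
    and "1 - S ^ Suc i \<le> 1 - S ^ Suc i * (1 - real (Suc i) / real n)"
    and "1 - S ^ Suc i * (1 - real (Suc i) / real n) \<le> 1"
    by (simp_all add: mult_left_le del: power_Suc)
qed

lemma qpoch_le_qpoch_damped:
  assumes "0 \<le> S" "S \<le> 1" "m \<le> n"
  shows "qpoch S m \<le> qpoch_damped S n m"
  unfolding qpoch_def qpoch_damped_def
proof (rule prod_mono)
  fix i assume "i \<in> {..<m}"
  then show "0 \<le> 1 - S ^ Suc i \<and> 1 - S ^ Suc i \<le> 1 - S ^ Suc i * (1 - real (Suc i) / real n)"
    using qpoch_damped_factor_bounds(1,2)[of S i n] assms by simp
qed

lemma qpoch_damped_le_1:
  assumes "0 \<le> S" "S \<le> 1" "m \<le> n"
  shows "qpoch_damped S n m \<le> 1"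
  unfolding qpoch_damped_def
proof (rule prod_le_1)
  fix i assume "i \<in> {..<m}"
  then show "0 \<le> 1 - S ^ Suc i * (1 - real (Suc i) / real n)
      \<and> 1 - S ^ Suc i * (1 - real (Suc i) / real n) \<le> 1"
    using qpoch_damped_factor_bounds[of S i n] assms by simp
qed

lemma qpoch_damped_pos:
  assumes "0 \<le> S" "S < 1" "m \<le> n"
  shows "0 < qpoch_damped S n m"
  using qpoch_pos[OF assms(1,2)] qpoch_le_qpoch_damped[of S m n] assms by (meson less_le_trans less_imp_le)

lemma qpoch_damped_antimono:
  assumes S: "0 \<le> S" "S < 1" and "m \<le> m'" "m' \<le> n"
  shows "qpoch_damped S n m' \<le> qpoch_damped S n m"
  using assms(3,4)
proof (induction m' rule: dec_induct)
  case base
  then show ?case by simp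
next
  case (step j)
  have "qpoch_damped S n (Suc j) = qpoch_damped S n j * (1 - S ^ Suc j * (1 - real (Suc j) / real n))"
    by (simp add: qpoch_damped_def)
  also have "\<dots> \<le> qpoch_damped S n j"
    using qpoch_damped_factor_bounds(2)[of S j n] qpoch_damped_pos[of S j n] S step
    by (intro mult_left_le) auto
  finally show ?case using step by simp
qed

lemma qpoch_damped_tendsto: "(\<lambda>n. qpoch_damped S n m) \<longlonglongrightarrow> qpoch S m"
  unfolding qpoch_damped_def qpoch_def
proof (rule tendsto_prod)
  fix i
  have "(\<lambda>n. 1 - S ^ Suc i * (1 - real (Suc i) / real n)) \<longlonglongrightarrow> 1 - S ^ Suc i * (1 - 0)"
    by (intro tendsto_intros)
  then show "(\<lambda>n. 1 - S ^ Suc i * (1 - real (Suc i) / real n)) \<longlonglongrightarrow> 1 - S ^ Suc i"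
    by simp
qed

lemma qpoch_damped_diag_tendsto:
  assumes S: "0 \<le> S" "S < 1"
  shows "(\<lambda>n. qpoch_damped S n n) \<longlonglongrightarrow> qpoch_inf S"
proof (rule order_tendstoI)
  fix a assume "a < qpoch_inf S"
  moreover have "qpoch_inf S \<le> qpoch_damped S n n" for n
    using qpoch_inf_le_qpoch[OF S, of n] qpoch_le_qpoch_damped[of S n n] S by simp
  ultimately show "\<forall>\<^sub>F n in sequentially. a < qpoch_damped S n n"
    by (auto intro: always_eventually less_le_trans)
next
  fix a assume "qpoch_inf S < a"
  then have "\<forall>\<^sub>F m in sequentially. qpoch S m < a"
    by (rule order_tendstoD(2)[OF qpoch_tendsto[OF S]])
  then obtain m where m: "qpoch S m < a"
    by (auto simp: eventually_sequentially)
  have "\<forall>\<^sub>F n in sequentially. qpoch_damped S n m < a"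
    using qpoch_damped_tendsto m by (rule order_tendstoD(2))
  moreover have "\<forall>\<^sub>F n in sequentially. m \<le> n"
    by (rule eventually_ge_at_top)
  ultimately show "\<forall>\<^sub>F n in sequentially. qpoch_damped S n n < a"
    by eventually_elim (use qpoch_damped_antimono[OF S] in \<open>fastforce intro: le_less_trans\<close>)
qed

lemma wgt_Suc:
  "wgt \<alpha> \<beta> n (Suc m) = wgt \<alpha> \<beta> n m * (real (n - m) / real n) * (1 - \<alpha>) * (1 - \<beta>) ^ Suc m"
proof -
  have "Suc m * (Suc m + 1) div 2 = m * (m + 1) div 2 + Suc m"
    by (simp add: algebra_simps)
  then show ?thesis
    unfolding wgt_def by (simp add: power_add field_simps)
qed

lemma wgt_diag:
  "wgt \<alpha> \<beta> n n = fact n / real n ^ n * (1 - \<alpha>) ^ n * (1 - \<beta>) ^ (n * (n + 1) div 2)"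
proof -
  have "(\<Prod>i<n. real (n - i)) = fact n"
    using fact_prod_rev[where 'a=real, of n] by (simp add: atLeast0LessThan)
  then show ?thesis by (simp add: wgt_def)
qed

lemma binomial_moment_closed_form:
  assumes st: "is_stationary_law \<alpha> \<beta> n v" and n: "0 < n"
    and \<alpha>: "0 \<le> \<alpha>" "\<alpha> \<le> 1" and \<beta>: "0 \<le> \<beta>" "\<beta> \<le> 1"
  shows "m \<le> n \<Longrightarrow> binomial_moment v n m * qpoch_damped (1 - \<beta>) n m = wgt \<alpha> \<beta> n m"
proof (induction m)
  case 0
  then show ?case using binomial_moment_0[OF st] by (simp add: qpoch_damped_def wgt_def)
next
  case (Suc m)
  let ?h = "binomial_moment v n" and ?S = "1 - \<beta>"
  let ?f = "1 - ?S ^ Suc m * (1 - real (Suc m) / real n)"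
  have "1 - real m / real n = real (n - m) / real n"
    using Suc.prems n by (simp add: of_nat_diff diff_divide_distrib)
  then have rec: "?h (Suc m) * ?f = ?S ^ Suc m * (1 - \<alpha>) * (real (n - m) / real n) * ?h m"
    using binomial_moment_Suc[OF st n \<alpha> \<beta>, of m] by (simp add: mult_ac)
  have "?h (Suc m) * qpoch_damped ?S n (Suc m) = (?h (Suc m) * ?f) * qpoch_damped ?S n m"
    by (simp add: qpoch_damped_def mult_ac)
  also have "\<dots> = (?h m * qpoch_damped ?S n m) * (real (n - m) / real n) * (1 - \<alpha>) * ?S ^ Suc m"
    unfolding rec by (simp only: ac_simps)
  also have "\<dots> = wgt \<alpha> \<beta> n (Suc m)"
    using Suc by (simp add: wgt_Suc)
  finally show ?case .
qed

lemma binomial_moment_Suc_ratio_le: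
  assumes st: "is_stationary_law \<alpha> \<beta> n v" and n: "0 < n" "k \<le> n"
    and \<alpha>: "0 \<le> \<alpha>" "\<alpha> \<le> 1" and \<beta>: "0 \<le> \<beta>" "\<beta> \<le> 1"
  shows "\<beta> * binomial_moment v n (Suc k) \<le> (1 - \<beta>) ^ Suc k * binomial_moment v n k"
proof -
  let ?h = "binomial_moment v n" and ?S = "1 - \<beta>"
  have h: "0 \<le> ?h k" "0 \<le> ?h (Suc k)"
    using binomial_moment_nonneg[OF st] by auto
  have S: "0 \<le> ?S ^ Suc k" "?S ^ Suc k \<le> ?S"
    using \<beta> by (auto simp: power_le_one mult_left_le)
  have "\<beta> \<le> 1 - ?S ^ Suc k * (1 - real (Suc k) / real n)"
    using S mult_left_le[of "1 - real (Suc k) / real n" "?S ^ Suc k"] by simp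
  from mult_left_mono[OF this h(2)]
  have "\<beta> * ?h (Suc k) \<le> ?h (Suc k) * (1 - ?S ^ Suc k * (1 - real (Suc k) / real n))"
    by (simp add: mult.commute)
  also have "\<dots> = ?S ^ Suc k * ((1 - \<alpha>) * (1 - real k / real n) * ?h k)"
    by (rule binomial_moment_Suc[OF st n(1) \<alpha> \<beta>])
  also have "\<dots> \<le> ?S ^ Suc k * ?h k"
    using \<alpha> n S h by (intro mult_left_mono mult_left_le_one_le) (auto simp: mult_le_one)
  finally show ?thesis .
qed

lemma stationary_law_upper_bound:
  assumes st: "is_stationary_law \<alpha> \<beta> n v" and n: "0 < n" "k \<le> n"
    and \<alpha>: "0 \<le> \<alpha>" "\<alpha> \<le> 1" and \<beta>: "0 < \<beta>" "\<beta> \<le> 1"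
  shows "v k \<le> wgt \<alpha> \<beta> n k / qpoch_inf (1 - \<beta>)"
proof -
  let ?D = "qpoch_damped (1 - \<beta>) n k"
  have S: "0 \<le> 1 - \<beta>" "1 - \<beta> < 1"
    using \<beta> by auto
  have q: "0 < qpoch_inf (1 - \<beta>)" "qpoch_inf (1 - \<beta>) \<le> ?D"
    using qpoch_inf_pos[OF S] qpoch_inf_le_qpoch[OF S] qpoch_le_qpoch_damped[of "1 - \<beta>" k n] n \<beta>
    by (auto intro: order_trans)
  have w: "binomial_moment v n k * ?D = wgt \<alpha> \<beta> n k"
    using binomial_moment_closed_form[OF st n(1) \<alpha>] \<beta> n by simp
  have "v k \<le> binomial_moment v n k"
    using st n by (intro le_binomial_moment) (auto simp: is_stationary_law_def)
  also have "\<dots> = wgt \<alpha> \<beta> n k / ?D"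
    using w q by (simp add: eq_divide_eq)
  also have "\<dots> \<le> wgt \<alpha> \<beta> n k / qpoch_inf (1 - \<beta>)"
  proof (rule divide_left_mono)
    show "0 \<le> wgt \<alpha> \<beta> n k"
      unfolding w[symmetric] using binomial_moment_nonneg[OF st, of k] q by simp
  qed (use q in auto)
  finally show ?thesis .
qed

lemma stationary_law_lower_bound:
  assumes st: "is_stationary_law \<alpha> \<beta> n v" and n: "0 < n" "k \<le> n"
    and \<alpha>: "0 \<le> \<alpha>" "\<alpha> \<le> 1" and \<beta>: "0 < \<beta>" "\<beta> \<le> 1"
    and small: "real (Suc k) * (1 - \<beta>) ^ Suc k \<le> \<beta> / 2"
  shows "wgt \<alpha> \<beta> n k / 2 \<le> v k"
proof -
  let ?h = "binomial_moment v n"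
  have h: "0 \<le> ?h k" "0 \<le> ?h (Suc k)"
    using binomial_moment_nonneg[OF st] by auto
  have "\<beta> * (real (Suc k) * ?h (Suc k)) \<le> real (Suc k) * (1 - \<beta>) ^ Suc k * ?h k"
    using binomial_moment_Suc_ratio_le[OF st n \<alpha>] \<beta> mult_left_mono[of _ _ "real (Suc k)"]
    by (fastforce simp: mult_ac)
  also have "\<dots> \<le> \<beta> * (?h k / 2)"
    using mult_right_mono[OF small h(1)] by simp
  finally have tail: "real (Suc k) * ?h (Suc k) \<le> ?h k / 2"
    using \<beta> by simp
  have "wgt \<alpha> \<beta> n k = ?h k * qpoch_damped (1 - \<beta>) n k"
    using binomial_moment_closed_form[OF st n(1) \<alpha>] \<beta> n by simp
  also have "\<dots> \<le> ?h k"
    using qpoch_damped_le_1[of "1 - \<beta>" k n] \<beta> n h by (simp add: mult_left_le)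
  finally show ?thesis
    using binomial_moment_Bonferroni[of n v k] st n tail by (auto simp: is_stationary_law_def)
qed

lemma stationary_law_diag_asymp_equiv:
  assumes \<alpha>: "0 \<le> \<alpha>" "\<alpha> < 1" and \<beta>: "0 < \<beta>" "\<beta> < 1"
    and stat: "\<And>n. n \<ge> 1 \<Longrightarrow> is_stationary_law \<alpha> \<beta> n (\<nu> n)"
  shows "(\<lambda>n. \<nu> n n) \<sim>[at_top] (\<lambda>n. wgt \<alpha> \<beta> n n / qpoch_inf (1 - \<beta>))"
proof (rule asymp_equivI')
  let ?S = "1 - \<beta>"
  have S: "0 \<le> ?S" "?S < 1" using \<beta> by auto
  have q: "0 < qpoch_inf ?S"
    using S by (rule qpoch_inf_pos)
  have "(\<lambda>n. qpoch_inf ?S / qpoch_damped ?S n n) \<longlonglongrightarrow> qpoch_inf ?S / qpoch_inf ?S"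
    using qpoch_damped_diag_tendsto[OF S] q by (intro tendsto_intros) auto
  moreover have "qpoch_inf ?S / qpoch_damped ?S n n = \<nu> n n / (wgt \<alpha> \<beta> n n / qpoch_inf ?S)"
    if n: "0 < n" for n
  proof -
    have "is_stationary_law \<alpha> \<beta> n (\<nu> n)"
      using stat n by simp
    then have "\<nu> n n * qpoch_damped ?S n n = wgt \<alpha> \<beta> n n"
      using binomial_moment_closed_form[OF _ n, of _ _ "\<nu> n" n, unfolded binomial_moment_diag] \<alpha> \<beta>
      by simp
    moreover have "0 < wgt \<alpha> \<beta> n n"
      using \<alpha> \<beta> n by (simp add: wgt_diag)
    moreover have "0 < qpoch_damped ?S n n"
      using S by (rule qpoch_damped_pos) simp
    ultimately show ?thesis
      using q by (simp add: field_simps)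
  qed
  ultimately show "(\<lambda>n. \<nu> n n / (wgt \<alpha> \<beta> n n / qpoch_inf ?S)) \<longlonglongrightarrow> 1"
    using q by (simp add: eventually_at_top_dense Lim_transform_eventually)
qed

lemma stationary_law_two_sided_bound:
  assumes \<alpha>: "0 \<le> \<alpha>" "\<alpha> \<le> 1" and \<beta>: "0 < \<beta>" "\<beta> \<le> 1"
    and stat: "\<And>n. n \<ge> 1 \<Longrightarrow> is_stationary_law \<alpha> \<beta> n (\<nu> n)"
  obtains M where "\<And>n k. 1 \<le> n \<Longrightarrow> M \<le> k \<Longrightarrow> k \<le> n \<Longrightarrow>
    wgt \<alpha> \<beta> n k / 2 \<le> \<nu> n k \<and> \<nu> n k \<le> wgt \<alpha> \<beta> n k / qpoch_inf (1 - \<beta>)"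
proof -
  have "(\<lambda>k. real k * (1 - \<beta>) ^ k) \<longlonglongrightarrow> 0"
    using \<beta> by (intro powser_times_n_limit_0) simp
  then have "\<forall>\<^sub>F k in sequentially. real k * (1 - \<beta>) ^ k < \<beta> / 2"
    using \<beta> by (intro order_tendstoD(2)) auto
  then obtain M where M: "\<And>k. M \<le> k \<Longrightarrow> real k * (1 - \<beta>) ^ k < \<beta> / 2"
    by (auto simp: eventually_sequentially)
  show ?thesis
  proof
    fix n k assume n: "1 \<le> n" and k: "M \<le> k" "k \<le> n"
    show "wgt \<alpha> \<beta> n k / 2 \<le> \<nu> n k \<and> \<nu> n k \<le> wgt \<alpha> \<beta> n k / qpoch_inf (1 - \<beta>)"
      using stationary_law_lower_bound[OF stat[OF n] _ k(2) \<alpha> \<beta>]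
        stationary_law_upper_bound[OF stat[OF n] _ k(2) \<alpha> \<beta>] M[of "Suc k"] n k by simp
  qed
qed

theorem mainTheorem16:
  fixes \<alpha> \<beta> :: real and \<nu> :: "nat \<Rightarrow> nat \<Rightarrow> real"
  assumes "0 \<le> \<alpha>" "\<alpha> < 1" "0 < \<beta>" "\<beta> < 1"
    and stat: "\<And>n. n \<ge> 1 \<Longrightarrow> is_stationary_law \<alpha> \<beta> n (\<nu> n)"
  shows "(\<exists>c C :: real. \<exists>M :: nat. 0 < c \<and> c < C \<and>
           (\<exists>N. \<forall>n\<ge>N. \<forall>k. M \<le> k \<and> k \<le> n \<longrightarrow>
              c * wgt \<alpha> \<beta> n k \<le> \<nu> n k \<and> \<nu> n k \<le> C * wgt \<alpha> \<beta> n k)) \<and>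
         ((\<lambda>n. \<nu> n n) \<sim>[at_top]
           (\<lambda>n. 1 / qpoch_inf (1 - \<beta>) * (fact n / real n ^ n) *
                (1 - \<alpha>) ^ n * (1 - \<beta>) ^ (n * (n + 1) div 2)))"
proof -
  note \<alpha> = assms(1,2) and \<beta> = assms(3,4)
  let ?q = "qpoch_inf (1 - \<beta>)"
  obtain M where M: "\<And>n k. 1 \<le> n \<Longrightarrow> M \<le> k \<Longrightarrow> k \<le> n \<Longrightarrow>
      wgt \<alpha> \<beta> n k / 2 \<le> \<nu> n k \<and> \<nu> n k \<le> wgt \<alpha> \<beta> n k / ?q"
    using stationary_law_two_sided_bound[of \<alpha> \<beta> \<nu>] \<alpha> \<beta> stat by force
  have q: "0 < ?q" "?q \<le> 1"
    using qpoch_inf_pos[of "1 - \<beta>"] qpoch_inf_le_qpoch[of "1 - \<beta>" 0] \<beta> by (simp_all add: qpoch_def)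
  have "(\<lambda>n. wgt \<alpha> \<beta> n n / ?q)
      = (\<lambda>n. 1 / ?q * (fact n / real n ^ n) * (1 - \<alpha>) ^ n * (1 - \<beta>) ^ (n * (n + 1) div 2))"
    by (intro ext) (simp add: wgt_diag)
  with stationary_law_diag_asymp_equiv[OF \<alpha> \<beta> stat]
  have "(\<lambda>n. \<nu> n n) \<sim>[at_top]
      (\<lambda>n. 1 / ?q * (fact n / real n ^ n) * (1 - \<alpha>) ^ n * (1 - \<beta>) ^ (n * (n + 1) div 2))"
    by simp
  moreover have "1/2 < 1/?q"
    using q by (simp add: field_simps)
  ultimately show ?thesis
    using M by (intro conjI exI[of _ "1/2"] exI[of _ "1/?q"] exI[of _ M] exI[of _ 1]) auto
qed

end
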